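(* Let $(F,t)\in U$, $Y=Y_{F,t}$, and $p_1,p_2\in C_i$ ($i\in\{1,2\}$). Let $l_{p_1p_2}$ be the residual line of $\overline{p_0p_1}+\overline{p_0p_2}$, i.e. the line with $Y\cap P=\overline{p_0p_1}+\overline{p_0p_2}+l_{p_1p_2}$, where $P$ is the plane spanned by $p_0,p_1,p_2$ (when $p_1=p_2$, $P$ is the tangent plane of the cone $\hat C_i$ along $\overline{p_0p_1}$). Then $l_{p_1p_2}=\overline{p_0p_3}$, where $p_3$ is the third intersection point of the line $\overline{p_1p_2}$ with $C_i$. In particular $l_{p_1p_2}\in\Gamma_i$.
   Context: $U=U_0\times\mathbb{A}^1$, where $U_0$ is the space of cubic forms $F(x_0,\dots,x_3)$ such that the curve cut out by $F$ on the quadric $x_0x_3=x_1x_2$ in $\mathbb{P}^3$ is smooth, avoids $[0,0,0,1]$, and is tangent with multiplicity $2$ to the lines $x_0=x_1=0$ and $x_0=x_2=0$. $Y_{F,t}\subset\mathbb{P}^5$ is $x_4^3-F(x_0,\dots,x_3)+x_5(x_0x_3-x_1x_2)+t\,x_0x_5^2=0$. $p_0=[0,\dots,0,1]$. $C_i=(x_0=x_i=x_5=0)\cap(x_4^3=F)$ is a plane cubic, $\hat C_i\subset Y$ the cone over $C_i$ with vertex $p_0$, and $\Gamma_i\subset F(Y)$ the image of $C_i\to F(Y)$, $p\mapsto\overline{p_0p}$. *)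

theory Defs
  imports "HOL-Analysis.Analysis"
begin

text \<open>Homogeneous coordinates: a point of P^5 is represented by a nonzero vector
  x :: complex^6 with coordinates x$0,...,x$5. Cubic forms in x0..x3 are functions
  of four complex arguments given by a homogeneous cubic polynomial.\<close>

type_synonym cform4 = "complex \<Rightarrow> complex \<Rightarrow> complex \<Rightarrow> complex \<Rightarrow> complex"

definition cubic_form4 :: "cform4 \<Rightarrow> bool" where
  "cubic_form4 F \<longleftrightarrow> (\<exists>c :: nat \<Rightarrow> nat \<Rightarrow> nat \<Rightarrow> complex. \<forall>x0 x1 x2 x3.
     F x0 x1 x2 x3 = (\<Sum>i<4. \<Sum>j<4. \<Sum>k<4.
        c i j k * [x0,x1,x2,x3] ! i * [x0,x1,x2,x3] ! j * [x0,x1,x2,x3] ! k))"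

definition quadQ :: cform4 where
  "quadQ x0 x1 x2 x3 = x0 * x3 - x1 * x2"

definition grad4 :: "cform4 \<Rightarrow> complex \<Rightarrow> complex \<Rightarrow> complex \<Rightarrow> complex \<Rightarrow> complex list" where
  "grad4 G x0 x1 x2 x3 =
     [deriv (\<lambda>s. G s x1 x2 x3) x0, deriv (\<lambda>s. G x0 s x2 x3) x1,
      deriv (\<lambda>s. G x0 x1 s x3) x2, deriv (\<lambda>s. G x0 x1 x2 s) x3]"

text \<open>The curve F = 0 on the quadric is smooth: at every point of it the Jacobian of
  (quadQ, F) has rank 2.\<close>
definition smooth_on_quadric :: "cform4 \<Rightarrow> bool" where
  "smooth_on_quadric F \<longleftrightarrow> (\<forall>x0 x1 x2 x3. (x0,x1,x2,x3) \<noteq> (0,0,0,0) \<and>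
      F x0 x1 x2 x3 = 0 \<and> quadQ x0 x1 x2 x3 = 0 \<longrightarrow>
      \<not> (\<exists>l m. (l,m) \<noteq> (0,0) \<and> (\<forall>k<4.
          l * grad4 F x0 x1 x2 x3 ! k + m * grad4 quadQ x0 x1 x2 x3 ! k = 0)))"

text \<open>A binary cubic f(u,v) (restriction of F to a line on the quadric) defines the
  divisor 2p + q with p \<noteq> q: the curve is tangent to the line with multiplicity 2.\<close>
definition tangent_mult2 :: "(complex \<Rightarrow> complex \<Rightarrow> complex) \<Rightarrow> bool" where
  "tangent_mult2 f \<longleftrightarrow> (\<exists>a b c d. a * d - b * c \<noteq> 0 \<and>
      (\<forall>u v. f u v = (a * u + b * v)^2 * (c * u + d * v)))"

definition U0 :: "cform4 \<Rightarrow> bool" where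
  "U0 F \<longleftrightarrow> cubic_form4 F \<and> smooth_on_quadric F \<and> F 0 0 0 1 \<noteq> 0 \<and>
     tangent_mult2 (\<lambda>u v. F 0 0 u v) \<and> tangent_mult2 (\<lambda>u v. F 0 u 0 v)"

definition Gform :: "cform4 \<Rightarrow> complex \<Rightarrow> complex^6 \<Rightarrow> complex" where
  "Gform F t x = (x$4)^3 - F (x$0) (x$1) (x$2) (x$3)
      + x$5 * (x$0 * x$3 - x$1 * x$2) + t * x$0 * (x$5)^2"

definition p0 :: "complex^6" where
  "p0 = (\<chi> j. if j = 5 then 1 else 0)"

definition in_Pi :: "nat \<Rightarrow> complex^6 \<Rightarrow> bool" where
  "in_Pi i x \<longleftrightarrow> x$0 = 0 \<and> x$5 = 0 \<and> (if i = 1 then x$1 = 0 else x$2 = 0)"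

definition Cpt :: "cform4 \<Rightarrow> nat \<Rightarrow> complex^6 \<Rightarrow> bool" where
  "Cpt F i x \<longleftrightarrow> x \<noteq> 0 \<and> in_Pi i x \<and> (x$4)^3 = F (x$0) (x$1) (x$2) (x$3)"

definition proportional :: "complex^6 \<Rightarrow> complex^6 \<Rightarrow> bool" where
  "proportional u v \<longleftrightarrow> (\<exists>c. v = c *s u)"

definition line_through :: "complex^6 \<Rightarrow> complex^6 \<Rightarrow> (complex^6) set" where
  "line_through u v = {a *s u + b *s v | a b. True}"

definition Gamma :: "cform4 \<Rightarrow> nat \<Rightarrow> (complex^6) set set" where
  "Gamma F i = {line_through p0 p | p. Cpt F i p}"

definition plane_pt :: "complex^6 \<Rightarrow> complex^6 \<Rightarrow> complex \<Rightarrow> complex \<Rightarrow> complex \<Rightarrow> complex^6" where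
  "plane_pt p q a b c = a *s p + b *s q + c *s p0"

text \<open>L is the residual line in the plane spanned by p0, p, q: restricted to that plane,
  the cubic equation of Y factors as D(a,b,c) times a nonzero linear form M, where D is the
  product of the equations of the given lines, and L is the zero set of M.\<close>
definition residual_line :: "cform4 \<Rightarrow> complex \<Rightarrow> complex^6 \<Rightarrow> complex^6
    \<Rightarrow> (complex \<Rightarrow> complex \<Rightarrow> complex \<Rightarrow> complex) \<Rightarrow> (complex^6) set \<Rightarrow> bool" where
  "residual_line F t p q D L \<longleftrightarrow> (\<exists>m1 m2 m3. (m1,m2,m3) \<noteq> (0,0,0) \<and>
     (\<forall>a b c. Gform F t (plane_pt p q a b c) = D a b c * (m1 * a + m2 * b + m3 * c)) \<and>
     L = {plane_pt p q a b c | a b c. m1 * a + m2 * b + m3 * c = 0})"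

text \<open>r is the residual (third) intersection point of the line through p, q (in the plane
  Pi_i) with C_i, given that the restriction of the cubic x4^3 - F to the line contains the
  known part D2(a,b) of the intersection divisor.\<close>
definition third_point :: "cform4 \<Rightarrow> complex^6 \<Rightarrow> complex^6
    \<Rightarrow> (complex \<Rightarrow> complex \<Rightarrow> complex) \<Rightarrow> complex^6 \<Rightarrow> bool" where
  "third_point F p q D2 r \<longleftrightarrow> (\<exists>\<alpha> \<beta> \<kappa>. (\<alpha>,\<beta>) \<noteq> (0,0) \<and> \<kappa> \<noteq> 0 \<and> r = \<alpha> *s p + \<beta> *s q \<and>
     (\<forall>a b. let x = a *s p + b *s q in
        (x$4)^3 - F (x$0) (x$1) (x$2) (x$3) = \<kappa> * D2 a b * (\<beta> * a - \<alpha> * b)))"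

text \<open>w gives a tangent direction to C_i at p: w lies in Pi_i, is independent of p, and
  the line through p and w meets C_i at p with multiplicity at least 2.\<close>
definition tangent_dir :: "cform4 \<Rightarrow> nat \<Rightarrow> complex^6 \<Rightarrow> complex^6 \<Rightarrow> bool" where
  "tangent_dir F i p w \<longleftrightarrow> in_Pi i w \<and> \<not> proportional p w \<and> w \<noteq> 0 \<and>
     (\<exists>c1 c2. \<forall>a b. let x = a *s p + b *s w in
        (x$4)^3 - F (x$0) (x$1) (x$2) (x$3) = b^2 * (c1 * a + c2 * b))"

end

theory Submission
  imports Defs
begin

text \<open>Let l be the line through p1 and p2 in the plane Pi_i. On the plane P spanned by p0 and l
  the equation of Y does not involve x5, so Y \<inter> P is the cone with vertex p0 over the divisor
  that C_i cuts out on l. Restricted to l, the cubic x4^3 - F is a binary cubic vanishing at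
  the known points, so it splits off the linear form vanishing at the third point p3, and the
  residual line is the cone over p3. The restriction is not identically zero: C_i has the
  equation x4^3 = u^2 v with independent linear forms u, v in two of the coordinates, and if
  this held identically along a line, the restrictions of u and v to it would be proportional,
  which for independent u, v forces the line to degenerate to a point.\<close>

lemma exhaust_6:
  fixes x :: 6
  shows "x = 0 \<or> x = 1 \<or> x = 2 \<or> x = 3 \<or> x = 4 \<or> x = 5"
proof (induct x)
  case (of_int z)
  then have "z = 0 \<or> z = 1 \<or> z = 2 \<or> z = 3 \<or> z = 4 \<or> z = 5" by fastforce
  then show ?case by auto
qed

definition binary_cubic :: "(complex \<Rightarrow> complex \<Rightarrow> complex) \<Rightarrow> bool" where
  "binary_cubic f \<longleftrightarrow> (\<exists>A B C D. \<forall>a b. f a b = A*a^3 + B*a^2*b + C*a*b^2 + D*b^3)"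

lemma binary_cubic_zero: "binary_cubic (\<lambda>a b. 0)"
  unfolding binary_cubic_def by (rule exI[of _ 0])+ simp

lemma binary_cubic_add:
  assumes "binary_cubic f" "binary_cubic g"
  shows "binary_cubic (\<lambda>a b. f a b + g a b)"
proof -
  obtain A B C D A' B' C' D' where
    "\<forall>a b. f a b = A*a^3 + B*a^2*b + C*a*b^2 + D*b^3"
    "\<forall>a b. g a b = A'*a^3 + B'*a^2*b + C'*a*b^2 + D'*b^3"
    using assms unfolding binary_cubic_def by blast
  then show ?thesis unfolding binary_cubic_def
    by (intro exI[of _ "A+A'"] exI[of _ "B+B'"] exI[of _ "C+C'"] exI[of _ "D+D'"])
      (simp add: algebra_simps)
qed

lemma binary_cubic_diff:
  assumes "binary_cubic f" "binary_cubic g"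
  shows "binary_cubic (\<lambda>a b. f a b - g a b)"
proof -
  obtain A B C D A' B' C' D' where
    "\<forall>a b. f a b = A*a^3 + B*a^2*b + C*a*b^2 + D*b^3"
    "\<forall>a b. g a b = A'*a^3 + B'*a^2*b + C'*a*b^2 + D'*b^3"
    using assms unfolding binary_cubic_def by blast
  then show ?thesis unfolding binary_cubic_def
    by (intro exI[of _ "A-A'"] exI[of _ "B-B'"] exI[of _ "C-C'"] exI[of _ "D-D'"])
      (simp add: algebra_simps)
qed

lemma binary_cubic_sum:
  "finite S \<Longrightarrow> (\<And>s. s \<in> S \<Longrightarrow> binary_cubic (f s)) \<Longrightarrow> binary_cubic (\<lambda>a b. \<Sum>s\<in>S. f s a b)"
  by (induction S rule: finite_induct) (simp_all add: binary_cubic_zero binary_cubic_add)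

lemma binary_cubic_prod_linear:
  "binary_cubic (\<lambda>a b. k * (a*u1 + b*w1) * (a*u2 + b*w2) * (a*u3 + b*w3))"
  unfolding binary_cubic_def
  by (rule exI[of _ "k*u1*u2*u3"], rule exI[of _ "k*(u1*u2*w3 + u1*w2*u3 + w1*u2*u3)"],
      rule exI[of _ "k*(u1*w2*w3 + w1*u2*w3 + w1*w2*u3)"], rule exI[of _ "k*w1*w2*w3"])
     (simp add: algebra_simps power2_eq_square power3_eq_cube)

lemma binary_cubic_zero_at_axes:
  assumes "binary_cubic f" "f 1 0 = 0" "f 0 1 = 0"
  obtains B C where "\<And>a b. f a b = a * b * (B*a + C*b)"
proof -
  obtain A B C D where f: "\<And>a b. f a b = A*a^3 + B*a^2*b + C*a*b^2 + D*b^3"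
    using assms(1) unfolding binary_cubic_def by blast
  have "A = 0" "D = 0" using assms(2,3) f[of 1 0] f[of 0 1] by simp_all
  then have "\<And>a b. f a b = a * b * (B*a + C*b)"
    by (simp add: f algebra_simps power2_eq_square power3_eq_cube)
  then show thesis by (rule that)
qed

lemma cubic_form4_restrict_line:
  assumes "cubic_form4 F"
  shows "binary_cubic (\<lambda>a b. F (a*u0 + b*w0) (a*u1 + b*w1) (a*u2 + b*w2) (a*u3 + b*w3))"
proof -
  obtain c where c: "\<And>x0 x1 x2 x3. F x0 x1 x2 x3 = (\<Sum>i<4. \<Sum>j<4. \<Sum>k<4.
        c i j k * [x0,x1,x2,x3] ! i * [x0,x1,x2,x3] ! j * [x0,x1,x2,x3] ! k)"
    using assms unfolding cubic_form4_def by blast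
  let ?u = "[u0,u1,u2,u3]" and ?w = "[w0,w1,w2,w3]"
  have nth: "[a*u0 + b*w0, a*u1 + b*w1, a*u2 + b*w2, a*u3 + b*w3] ! i = a * ?u!i + b * ?w!i"
    if "i < 4" for a b :: complex and i
    using that by (auto simp: less_Suc_eq numeral_eq_Suc)
  have "binary_cubic (\<lambda>a b. \<Sum>i<4. \<Sum>j<4. \<Sum>k<4.
        c i j k * (a * ?u!i + b * ?w!i) * (a * ?u!j + b * ?w!j) * (a * ?u!k + b * ?w!k))"
    by (intro binary_cubic_sum finite_lessThan binary_cubic_prod_linear)
  then show ?thesis
    unfolding c by (simp add: nth)
qed

lemma cube_eq_square_mult_linear_dependent:
  fixes y1 y2 l1 l2 m1 m2 :: complex
  assumes h: "\<And>a b. (y1*a + y2*b)^3 = (l1*a + l2*b)^2 * (m1*a + m2*b)"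
  shows "l1*y2 - l2*y1 = 0 \<and> m1*y2 - m2*y1 = 0 \<and> l1*m2 - l2*m1 = 0"
proof -
  have ly: "l1*y2 - l2*y1 = 0"
  proof -
    have "(y1*(-l2) + y2*l1)^3 = (l1*(-l2) + l2*l1)^2 * (m1*(-l2) + m2*l1)" by (rule h)
    then have "(l1*y2 - l2*y1)^3 = 0" by (simp add: algebra_simps)
    then show ?thesis by simp
  qed
  have my: "m1*y2 - m2*y1 = 0"
  proof -
    have "(y1*(-m2) + y2*m1)^3 = (l1*(-m2) + l2*m1)^2 * (m1*(-m2) + m2*m1)" by (rule h)
    then have "(m1*y2 - m2*y1)^3 = 0" by (simp add: algebra_simps)
    then show ?thesis by simp
  qed
  have lm: "l1*m2 - l2*m1 = 0"
  proof (rule ccontr)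
    assume d: "l1*m2 - l2*m1 \<noteq> 0"
    \<comment> \<open>y is proportional to the independent forms l and m, hence zero\<close>
    have "y1 * (l1*m2 - l2*m1) = 0" "y2 * (l1*m2 - l2*m1) = 0"
      using ly my by algebra+
    with d have "y1 = 0" "y2 = 0" by simp_all
    moreover have "(y1*(m2-l2) + y2*(l1-m1))^3
        = (l1*(m2-l2) + l2*(l1-m1))^2 * (m1*(m2-l2) + m2*(l1-m1))" by (rule h)
    ultimately have "(l1*m2 - l2*m1)^3 = 0" by (simp add: algebra_simps power2_eq_square power3_eq_cube)
    with d show False by simp
  qed
  from ly my lm show ?thesis by blast
qed

lemma homogeneous_2x2_system_trivial:
  fixes \<alpha> \<beta> \<gamma> \<delta> X Y :: complex
  assumes "\<alpha>*\<delta> - \<beta>*\<gamma> \<noteq> 0" "\<alpha>*X + \<beta>*Y = 0" "\<gamma>*X + \<delta>*Y = 0"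
  shows "X = 0 \<and> Y = 0"
proof -
  have "X * (\<alpha>*\<delta> - \<beta>*\<gamma>) = \<delta>*(\<alpha>*X + \<beta>*Y) - \<beta>*(\<gamma>*X + \<delta>*Y)"
    and "Y * (\<alpha>*\<delta> - \<beta>*\<gamma>) = \<alpha>*(\<gamma>*X + \<delta>*Y) - \<gamma>*(\<alpha>*X + \<beta>*Y)"
    by (simp_all add: algebra_simps)
  then have "X * (\<alpha>*\<delta> - \<beta>*\<gamma>) = 0" "Y * (\<alpha>*\<delta> - \<beta>*\<gamma>) = 0"
    using assms(2,3) by simp_all
  with assms(1) show ?thesis by simp
qed

lemma tangent_cubic_contains_no_line:
  fixes x1 x2 y1 y2 z1 z2 :: complex
  assumes "tangent_mult2 f"
    and on_curve: "\<And>a b. (z1*a + z2*b)^3 = f (x1*a + x2*b) (y1*a + y2*b)"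
  shows "x1*y2 - x2*y1 = 0 \<and> x1*z2 - x2*z1 = 0 \<and> y1*z2 - y2*z1 = 0"
proof -
  obtain \<alpha> \<beta> \<gamma> \<delta> where det: "\<alpha>*\<delta> - \<beta>*\<gamma> \<noteq> 0"
    and f: "\<And>u v. f u v = (\<alpha>*u + \<beta> * v)^2 * (\<gamma>*u + \<delta> * v)"
    using assms(1) unfolding tangent_mult2_def by blast
  have "(z1*a + z2*b)^3 = ((\<alpha>*x1 + \<beta>*y1)*a + (\<alpha>*x2 + \<beta>*y2)*b)^2
          * ((\<gamma>*x1 + \<delta>*y1)*a + (\<gamma>*x2 + \<delta>*y2)*b)" for a b
    unfolding on_curve f by (simp add: algebra_simps)
  then have minors: "(\<alpha>*x1 + \<beta>*y1)*z2 - (\<alpha>*x2 + \<beta>*y2)*z1 = 0"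
      "(\<gamma>*x1 + \<delta>*y1)*z2 - (\<gamma>*x2 + \<delta>*y2)*z1 = 0"
      "(\<alpha>*x1 + \<beta>*y1)*(\<gamma>*x2 + \<delta>*y2) - (\<alpha>*x2 + \<beta>*y2)*(\<gamma>*x1 + \<delta>*y1) = 0"
    using cube_eq_square_mult_linear_dependent by blast+
  have "x1*z2 - x2*z1 = 0 \<and> y1*z2 - y2*z1 = 0"
    by (rule homogeneous_2x2_system_trivial[OF det]) (use minors in \<open>simp_all add: algebra_simps\<close>)
  moreover have "(\<alpha>*\<delta> - \<beta>*\<gamma>) * (x1*y2 - x2*y1) = 0"
    using minors(3) by (simp add: algebra_simps)
  ultimately show ?thesis using det by simp
qed

lemma proportionalI_minors:
  assumes "p \<noteq> 0" "\<And>j k. p$j * q$k = p$k * q$j"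
  shows "proportional p q"
proof -
  obtain k where k: "p$k \<noteq> 0" using assms(1) by (metis vec_eq_iff zero_index)
  have "q = (q$k / p$k) *s p"
    unfolding vec_eq_iff using assms(2)[of _ k] k by (simp add: field_simps)
  then show ?thesis unfolding proportional_def by blast
qed

lemma in_Pi_lincomb: "in_Pi i p \<Longrightarrow> in_Pi i q \<Longrightarrow> in_Pi i (a *s p + b *s q)"
  unfolding in_Pi_def by auto

definition plane_cubic :: "cform4 \<Rightarrow> complex^6 \<Rightarrow> complex" where
  "plane_cubic F x = (x$4)^3 - F (x$0) (x$1) (x$2) (x$3)"

lemma Let_plane_cubic_eq:
  "(let x = v in (x$4)^3 - F (x$0) (x$1) (x$2) (x$3) = y) \<longleftrightarrow> plane_cubic F v = y"
  by (simp add: Let_def plane_cubic_def)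

lemma binary_cubic_plane_cubic_line:
  assumes "cubic_form4 F"
  shows "binary_cubic (\<lambda>a b. plane_cubic F (a *s p + b *s q))"
proof -
  have "binary_cubic (\<lambda>a b. 1 * (a * p$4 + b * q$4) * (a * p$4 + b * q$4) * (a * p$4 + b * q$4)
      - F (a * p$0 + b * q$0) (a * p$1 + b * q$1) (a * p$2 + b * q$2) (a * p$3 + b * q$3))"
    by (intro binary_cubic_diff binary_cubic_prod_linear cubic_form4_restrict_line assms)
  then show ?thesis by (simp add: plane_cubic_def power3_eq_cube)
qed

text \<open>On the plane spanned by p0 and Pi_i the x5-terms of Y vanish (x0 = 0 and x1 x2 = 0
  there), so Y meets it in the cone with vertex p0 over C_i.\<close>

lemma Gform_plane_pt:
  assumes "i \<in> {1,2}" "in_Pi i p" "in_Pi i q"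
  shows "Gform F t (plane_pt p q a b c) = plane_cubic F (a *s p + b *s q)"
  using assms unfolding Gform_def plane_cubic_def plane_pt_def in_Pi_def p0_def by auto

lemma plane_cubic_on_Pi:
  assumes "U0 F" "i \<in> {1,2}"
  obtains s f where "tangent_mult2 f"
    and "\<And>x. in_Pi i x \<Longrightarrow> plane_cubic F x = (x$4)^3 - f (x$s) (x$3)"
    and "\<And>x j. in_Pi i x \<Longrightarrow> j \<noteq> s \<Longrightarrow> j \<noteq> 3 \<Longrightarrow> j \<noteq> 4 \<Longrightarrow> x$j = 0"
proof (cases "i = 1")
  case True
  show thesis
  proof (rule that[of "\<lambda>u v. F 0 0 u v" 2])
    show "tangent_mult2 (\<lambda>u v. F 0 0 u v)" using assms(1) unfolding U0_def by blast
    show "plane_cubic F x = (x$4)^3 - F 0 0 (x$2) (x$3)" if "in_Pi i x" for x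
      using that True unfolding in_Pi_def plane_cubic_def by simp
    show "x$j = 0" if "in_Pi i x" "j \<noteq> 2" "j \<noteq> 3" "j \<noteq> 4" for x j
      using that True exhaust_6[of j] unfolding in_Pi_def by auto
  qed
next
  case False
  with assms(2) have "i = 2" by blast
  show thesis
  proof (rule that[of "\<lambda>u v. F 0 u 0 v" 1])
    show "tangent_mult2 (\<lambda>u v. F 0 u 0 v)" using assms(1) unfolding U0_def by blast
    show "plane_cubic F x = (x$4)^3 - F 0 (x$1) 0 (x$3)" if "in_Pi i x" for x
      using that \<open>i = 2\<close> unfolding in_Pi_def plane_cubic_def by simp
    show "x$j = 0" if "in_Pi i x" "j \<noteq> 1" "j \<noteq> 3" "j \<noteq> 4" for x j
      using that \<open>i = 2\<close> exhaust_6[of j] unfolding in_Pi_def by auto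
  qed
qed

lemma plane_cubic_not_zero_on_line:
  assumes "U0 F" "i \<in> {1,2}" "in_Pi i p" "in_Pi i q" "p \<noteq> 0" "\<not> proportional p q"
  shows "\<exists>a b. plane_cubic F (a *s p + b *s q) \<noteq> 0"
proof (rule ccontr)
  assume "\<not> ?thesis"
  then have zero: "plane_cubic F (a *s p + b *s q) = 0" for a b by blast
  obtain s f where f: "tangent_mult2 f"
    and C: "\<And>x. in_Pi i x \<Longrightarrow> plane_cubic F x = (x$4)^3 - f (x$s) (x$3)"
    and support: "\<And>x j. in_Pi i x \<Longrightarrow> j \<noteq> s \<Longrightarrow> j \<noteq> 3 \<Longrightarrow> j \<noteq> 4 \<Longrightarrow> x$j = 0"
    using plane_cubic_on_Pi[OF assms(1,2)] by metis
  have "(p$4*a + q$4*b)^3 = f (p$s*a + q$s*b) (p$3*a + q$3*b)" for a b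
  proof -
    have "plane_cubic F (a *s p + b *s q)
        = (a * p$4 + b * q$4)^3 - f (a * p$s + b * q$s) (a * p$3 + b * q$3)"
      using C[OF in_Pi_lincomb[OF assms(3,4)]] by simp
    with zero[of a b] show ?thesis by (simp add: ac_simps)
  qed
  from tangent_cubic_contains_no_line[OF f this]
  have minors: "p$s*q$3 = p$3*q$s" "p$s*q$4 = p$4*q$s" "p$3*q$4 = p$4*q$3"
    by (simp_all add: algebra_simps)
  have "proportional p q"
  proof (rule proportionalI_minors[OF assms(5)])
    fix j k
    have "j \<in> {s, 3, 4} \<or> p$j = 0 \<and> q$j = 0" "k \<in> {s, 3, 4} \<or> p$k = 0 \<and> q$k = 0"
      using support assms(3,4) by blast+
    then show "p$j * q$k = p$k * q$j"
      by (elim disjE conjE insertE emptyE) (simp_all add: minors)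
  qed
  with assms(6) show False by blast
qed

lemma plane_pts_eq_line_through_p0:
  assumes "(\<alpha>, \<beta>) \<noteq> (0, 0)"
  shows "{plane_pt p q a b c | a b c. \<beta> * a = \<alpha> * b} = line_through p0 (\<alpha> *s p + \<beta> *s q)"
proof
  show "{plane_pt p q a b c | a b c. \<beta> * a = \<alpha> * b} \<subseteq> line_through p0 (\<alpha> *s p + \<beta> *s q)"
  proof clarify
    fix a b c assume ab: "\<beta> * a = \<alpha> * b"
    have "plane_pt p q a b c = c *s p0 + (if \<alpha> = 0 then b / \<beta> else a / \<alpha>) *s (\<alpha> *s p + \<beta> *s q)"
      using assms ab unfolding plane_pt_def by (auto simp: vec_eq_iff field_simps)
    then show "plane_pt p q a b c \<in> line_through p0 (\<alpha> *s p + \<beta> *s q)"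
      unfolding line_through_def by blast
  qed
  show "line_through p0 (\<alpha> *s p + \<beta> *s q) \<subseteq> {plane_pt p q a b c | a b c. \<beta> * a = \<alpha> * b}"
  proof
    fix x assume "x \<in> line_through p0 (\<alpha> *s p + \<beta> *s q)"
    then obtain u v where "x = u *s p0 + v *s (\<alpha> *s p + \<beta> *s q)"
      unfolding line_through_def by blast
    then have "x = plane_pt p q (v * \<alpha>) (v * \<beta>) u \<and> \<beta> * (v * \<alpha>) = \<alpha> * (v * \<beta>)"
      unfolding plane_pt_def by (simp add: vec_eq_iff algebra_simps)
    then show "x \<in> {plane_pt p q a b c | a b c. \<beta> * a = \<alpha> * b}" by blast
  qed
qed

lemma linear_forms_eq_off_axes:
  fixes m1 m2 m3 n1 n2 :: complex
  assumes "\<And>a b c. a \<noteq> 0 \<Longrightarrow> b \<noteq> 0 \<Longrightarrow> m1*a + m2*b + m3*c = n1*a + n2*b"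
  shows "m1 = n1 \<and> m2 = n2 \<and> m3 = 0"
proof -
  have "m1*1 + m2*1 + m3*0 = n1*1 + n2*1" "m1*1 + m2*1 + m3*1 = n1*1 + n2*1"
    "m1*1 + m2*2 + m3*0 = n1*1 + n2*2"
    by (rule assms; simp)+
  then show ?thesis by algebra
qed

lemma residual_line_exists:
  assumes "i \<in> {1,2}" "in_Pi i p" "in_Pi i q"
    and "\<And>a b. plane_cubic F (a *s p + b *s q) = D a b * (n1*a + n2*b)" "(n1, n2) \<noteq> (0, 0)"
  shows "residual_line F t p q (\<lambda>a b c. D a b) {plane_pt p q a b c | a b c. n1*a + n2*b = 0}"
  unfolding residual_line_def
  by (rule exI[of _ n1], rule exI[of _ n2], rule exI[of _ 0])
    (use assms(4,5) in \<open>simp add: Gform_plane_pt[OF assms(1-3)]\<close>)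

lemma third_point_exists:
  assumes "\<And>a b. plane_cubic F (a *s p + b *s q) = D a b * (n1*a + n2*b)" "(n1, n2) \<noteq> (0, 0)"
  shows "third_point F p q D ((- n2) *s p + n1 *s q)"
  unfolding third_point_def Let_plane_cubic_eq
  by (rule exI[of _ "- n2"], rule exI[of _ n1], rule exI[of _ 1])
    (use assms in \<open>auto simp: algebra_simps\<close>)

lemma third_point_in_C:
  assumes "third_point F p q D r" "in_Pi i p" "in_Pi i q" "p \<noteq> 0" "\<not> proportional p q"
  shows "Cpt F i r"
proof -
  obtain \<alpha> \<beta> \<kappa> where ab: "(\<alpha>, \<beta>) \<noteq> (0, 0)" and r: "r = \<alpha> *s p + \<beta> *s q"
    and factor: "\<And>a b. plane_cubic F (a *s p + b *s q) = \<kappa> * D a b * (\<beta> * a - \<alpha> * b)"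
    using assms(1) unfolding third_point_def Let_plane_cubic_eq by blast
  have "r \<noteq> 0"
  proof
    assume "r = 0"
    show False
    proof (cases "\<beta> = 0")
      case True
      with ab \<open>r = 0\<close> r assms(4) show False by (simp add: vec_eq_iff)
    next
      case False
      with \<open>r = 0\<close> r have "q = (- \<alpha> / \<beta>) *s p"
        by (simp add: vec_eq_iff field_simps) (metis add.commute add_eq_0_iff mult.commute)
      with assms(5) show False unfolding proportional_def by blast
    qed
  qed
  moreover have "plane_cubic F r = 0" using factor[of \<alpha> \<beta>] r by simp
  ultimately show ?thesis
    using in_Pi_lincomb[OF assms(2,3)] r unfolding Cpt_def plane_cubic_def by simp
qed

lemma residual_line_eq_line_through_third_point:
  assumes "i \<in> {1,2}" "in_Pi i p" "in_Pi i q" "\<And>a b. a \<noteq> 0 \<Longrightarrow> b \<noteq> 0 \<Longrightarrow> D a b \<noteq> 0"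
    and "residual_line F t p q (\<lambda>a b c. D a b) L" "third_point F p q D r"
  shows "L = line_through p0 r"
proof -
  obtain m1 m2 m3 where
    m: "\<And>a b c. Gform F t (plane_pt p q a b c) = D a b * (m1 * a + m2 * b + m3 * c)"
    and L: "L = {plane_pt p q a b c | a b c. m1 * a + m2 * b + m3 * c = 0}"
    using assms(5) unfolding residual_line_def by blast
  obtain \<alpha> \<beta> \<kappa> where ab: "(\<alpha>, \<beta>) \<noteq> (0, 0)" and \<kappa>: "\<kappa> \<noteq> 0" and r: "r = \<alpha> *s p + \<beta> *s q"
    and factor: "\<And>a b. plane_cubic F (a *s p + b *s q) = \<kappa> * D a b * (\<beta> * a - \<alpha> * b)"
    using assms(6) unfolding third_point_def Let_plane_cubic_eq by blast
  have "m1*a + m2*b + m3*c = (\<kappa>*\<beta>)*a + (- \<kappa>*\<alpha>)*b" if "a \<noteq> 0" "b \<noteq> 0" for a b c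
  proof -
    have "D a b * (m1*a + m2*b + m3*c) = Gform F t (plane_pt p q a b c)" by (rule m[symmetric])
    also have "\<dots> = plane_cubic F (a *s p + b *s q)" by (rule Gform_plane_pt[OF assms(1-3)])
    also have "\<dots> = D a b * (\<kappa> * (\<beta> * a - \<alpha> * b))" by (simp add: factor)
    finally have "m1*a + m2*b + m3*c = \<kappa> * (\<beta> * a - \<alpha> * b)"
      using assms(4)[OF that] by simp
    then show ?thesis by (simp add: algebra_simps)
  qed
  then have "m1 = \<kappa>*\<beta>" "m2 = - \<kappa>*\<alpha>" "m3 = 0"
    using linear_forms_eq_off_axes by blast+
  with L \<kappa> have "L = {plane_pt p q a b c | a b c. \<beta> * a = \<alpha> * b}"
    by (auto simp: algebra_simps)
  with plane_pts_eq_line_through_p0[OF ab] r show ?thesis by simp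
qed

lemma residual_line_through_third_point:
  assumes "U0 F" "i \<in> {1,2}" "Cpt F i p" "in_Pi i q" "\<not> proportional p q"
    and factor: "\<And>a b. plane_cubic F (a *s p + b *s q) = D a b * (n1*a + n2*b)"
    and D: "\<And>a b. a \<noteq> 0 \<Longrightarrow> b \<noteq> 0 \<Longrightarrow> D a b \<noteq> 0"
  shows "(\<exists>L. residual_line F t p q (\<lambda>a b c. D a b) L) \<and> (\<exists>r. third_point F p q D r) \<and>
    (\<forall>L r. residual_line F t p q (\<lambda>a b c. D a b) L \<and> third_point F p q D r \<longrightarrow>
       L = line_through p0 r \<and> Cpt F i r \<and> L \<in> Gamma F i)"
proof (intro conjI allI impI; (elim conjE)?)
  have p: "p \<noteq> 0" "in_Pi i p" using assms(3) unfolding Cpt_def by simp_all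
  have "(n1, n2) \<noteq> (0, 0)"
    using plane_cubic_not_zero_on_line[OF assms(1,2) p(2) assms(4) p(1) assms(5)] factor by auto
  then show "\<exists>L. residual_line F t p q (\<lambda>a b c. D a b) L" "\<exists>r. third_point F p q D r"
    using residual_line_exists[OF assms(2) p(2) assms(4) factor] third_point_exists[OF factor]
    by blast+
  fix L r assume L: "residual_line F t p q (\<lambda>a b c. D a b) L" and r: "third_point F p q D r"
  show "L = line_through p0 r"
    by (rule residual_line_eq_line_through_third_point[OF assms(2) p(2) assms(4) D L r])
  moreover show "Cpt F i r"
    by (rule third_point_in_C[OF r p(2) assms(4) p(1) assms(5)])
  ultimately show "L \<in> Gamma F i" unfolding Gamma_def by blast
qed

theorem lemma5p5:
  fixes F :: cform4 and t :: complex and i :: nat and p1 p2 :: "complex^6"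
  assumes "U0 F"
    and "i \<in> {1, 2}"
    and "Cpt F i p1" and "Cpt F i p2"
  shows "(\<not> proportional p1 p2 \<longrightarrow>
            (\<exists>L. residual_line F t p1 p2 (\<lambda>a b c. a * b) L) \<and>
            (\<exists>r. third_point F p1 p2 (\<lambda>a b. a * b) r) \<and>
            (\<forall>L r. residual_line F t p1 p2 (\<lambda>a b c. a * b) L \<and>
                   third_point F p1 p2 (\<lambda>a b. a * b) r \<longrightarrow>
                   L = line_through p0 r \<and> Cpt F i r \<and> L \<in> Gamma F i))
       \<and> (proportional p1 p2 \<longrightarrow> (\<forall>w. tangent_dir F i p1 w \<longrightarrow>
            (\<exists>L. residual_line F t p1 w (\<lambda>a b c. b^2) L) \<and>
            (\<exists>r. third_point F p1 w (\<lambda>a b. b^2) r) \<and>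
            (\<forall>L r. residual_line F t p1 w (\<lambda>a b c. b^2) L \<and>
                   third_point F p1 w (\<lambda>a b. b^2) r \<longrightarrow>
                   L = line_through p0 r \<and> Cpt F i r \<and> L \<in> Gamma F i)))"
proof -
  have "binary_cubic (\<lambda>a b. plane_cubic F (a *s p1 + b *s p2))"
    using assms(1) unfolding U0_def by (simp add: binary_cubic_plane_cubic_line)
  moreover have "plane_cubic F (1 *s p1 + 0 *s p2) = 0" "plane_cubic F (0 *s p1 + 1 *s p2) = 0"
    using assms(3,4) unfolding Cpt_def plane_cubic_def by simp_all
  ultimately obtain B C
    where secant: "\<And>a b. plane_cubic F (a *s p1 + b *s p2) = a * b * (B*a + C*b)"
    using binary_cubic_zero_at_axes by blast
  have "in_Pi i p2" using assms(4) unfolding Cpt_def by simp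
  have tangent: "in_Pi i w \<and> \<not> proportional p1 w \<and>
      (\<exists>c1 c2. \<forall>a b. plane_cubic F (a *s p1 + b *s w) = b^2 * (c1*a + c2*b))"
    if "tangent_dir F i p1 w" for w
    using that unfolding tangent_dir_def Let_plane_cubic_eq by blast
  show ?thesis
    using residual_line_through_third_point[where D = "\<lambda>a b. a * b",
        OF assms(1-3) \<open>in_Pi i p2\<close> _ secant]
      residual_line_through_third_point[where D = "\<lambda>a b. b^2", OF assms(1-3)] tangent
    by simp blast
qed

end
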